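(* For any integer $n \geq 1$, define the $n$-qubit state \[ \ket{\psi_n} := \sum_{1 \leq i \leq 2^n - 1} \frac{1}{\sqrt{n}\,\sqrt{2^{\lfloor \log_2 i \rfloor}}} \ket{i}. \] Then for every nonempty subset $S \subseteq [2^n]$ we have $\langle \psi_n | S \rangle \leq \dfrac{2+\sqrt{2}}{\sqrt{n}}$.
   Context: The computational basis of $n$ qubits is indexed by $[2^n] = \{1,\dots,2^n\}$, written $\ket{i}$. For a nonempty subset $S \subseteq [2^n]$, the subset state is $\ket{S} := \frac{1}{\sqrt{|S|}} \sum_{i \in S} \ket{i}$. *)

theory Defs
  imports Complex_Main
begin

text \<open>n-qubit states are represented as real amplitude vectors on the computational
basis, indexed by the naturals 1..2^n (amplitudes outside this range are irrelevant).
All amplitudes involved are real, so the inner product needs no conjugation.\<close>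

definition subset_state :: "nat set \<Rightarrow> nat \<Rightarrow> real" where
  "subset_state S i = (if i \<in> S then 1 / sqrt (real (card S)) else 0)"

definition psi :: "nat \<Rightarrow> nat \<Rightarrow> real" where
  "psi n i = (if 1 \<le> i \<and> i \<le> 2 ^ n - 1
              then 1 / (sqrt (real n) * sqrt (2 ^ nat \<lfloor>log 2 (real i)\<rfloor>))
              else 0)"

definition inner_qubits :: "nat \<Rightarrow> (nat \<Rightarrow> real) \<Rightarrow> (nat \<Rightarrow> real) \<Rightarrow> real" where
  "inner_qubits n u v = (\<Sum>i\<in>{1..2 ^ n}. u i * v i)"

end

theory Submission
  imports Defs
begin

text \<open>Every amplitude of \<open>\<psi>\<^sub>n\<close> at \<open>i\<close> is at most \<open>\<surd>2 / (\<surd>n \<surd>i)\<close>, because the level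
  \<open>2^\<lfloor>log\<^sub>2 i\<rfloor>\<close> exceeds \<open>i/2\<close>. Since \<open>1/\<surd>i\<close> decreases, the sum of \<open>1/\<surd>i\<close> over a set of
  \<open>s\<close> positive indices is largest for \<open>{1..s}\<close>, where it is at most \<open>2\<surd>s\<close>. Hence
  \<open>\<langle>\<psi>\<^sub>n|S\<rangle> \<le> (1/\<surd>s) \<cdot> \<surd>2/\<surd>n \<cdot> 2\<surd>s = 2\<surd>2/\<surd>n \<le> (2+\<surd>2)/\<surd>n\<close>.\<close>

lemma sum_inverse_sqrt_le: "(\<Sum>i=1..s. 1 / sqrt (real i)) \<le> 2 * sqrt (real s)"
proof (induction s)
  case 0
  then show ?case by simp
next
  case (Suc s)
  define a b where "a = sqrt (real s)" and "b = sqrt (real (Suc s))"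
  have "b > 0" and "b * b = a * a + 1"
    by (simp_all add: a_def b_def)
  moreover have "0 \<le> (a - b) * (a - b)" by simp
  ultimately have step: "2 * a + 1 / b \<le> 2 * b"
    by (simp add: field_simps algebra_simps)
  have "(\<Sum>i=1..Suc s. 1 / sqrt (real i)) = (\<Sum>i=1..s. 1 / sqrt (real i)) + 1 / b"
    by (simp add: b_def sum.cl_ivl_Suc)
  also have "\<dots> \<le> 2 * a + 1 / b" using Suc.IH by (simp add: a_def)
  also have "\<dots> \<le> 2 * b" by (fact step)
  finally show ?case by (simp add: b_def)
qed

lemma sum_antimono_le_sum_initial:
  fixes f :: "nat \<Rightarrow> real"
  assumes antimono: "\<And>i j. 1 \<le> i \<Longrightarrow> i \<le> j \<Longrightarrow> f j \<le> f i"
    and "finite S" and "0 \<notin> S"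
  shows "(\<Sum>i\<in>S. f i) \<le> (\<Sum>i=1..card S. f i)"
  using assms(2,3)
proof (induction "card S" arbitrary: S)
  case 0
  then show ?case by simp
next
  case (Suc s)
  define m where "m = Max S"
  have "S \<noteq> {}" using Suc.hyps(2) by auto
  then have "m \<in> S" using Suc.prems(1) by (simp add: m_def)
  have "S \<subseteq> {1..m}"
    using Suc.prems by (auto simp: m_def Suc_le_eq intro: gr0I)
  then have "Suc s \<le> m"
    using card_mono[of "{1..m}" S] Suc.hyps(2) by simp
  then have last_le: "f m \<le> f (Suc s)" by (intro antimono) auto
  have "card (S - {m}) = s" using Suc.hyps(2) \<open>m \<in> S\<close> Suc.prems(1) by simp
  then have rest_le: "(\<Sum>i\<in>S - {m}. f i) \<le> (\<Sum>i=1..s. f i)"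
    using Suc.hyps(1)[of "S - {m}"] Suc.prems by simp
  have "(\<Sum>i\<in>S. f i) = (\<Sum>i\<in>S - {m}. f i) + f m"
    using Suc.prems(1) \<open>m \<in> S\<close> by (simp add: sum_diff1)
  also have "\<dots> \<le> (\<Sum>i=1..s. f i) + f (Suc s)" using rest_le last_le by simp
  also have "\<dots> = (\<Sum>i=1..card S. f i)" by (simp add: Suc.hyps(2)[symmetric] sum.cl_ivl_Suc)
  finally show ?case .
qed

lemma sum_inverse_sqrt_le_sqrt_card:
  assumes "finite S" and "0 \<notin> S"
  shows "(\<Sum>i\<in>S. 1 / sqrt (real i)) \<le> 2 * sqrt (real (card S))"
proof -
  have "(\<Sum>i\<in>S. 1 / sqrt (real i)) \<le> (\<Sum>i=1..card S. 1 / sqrt (real i))"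
    using assms by (intro sum_antimono_le_sum_initial divide_left_mono) auto
  also have "\<dots> \<le> 2 * sqrt (real (card S))" by (fact sum_inverse_sqrt_le)
  finally show ?thesis .
qed

lemma less_two_mult_two_pow_floor_log:
  assumes "(i::nat) \<ge> 1"
  shows "real i < 2 * 2 ^ nat \<lfloor>log 2 (real i)\<rfloor>"
proof -
  define k where "k = nat \<lfloor>log 2 (real i)\<rfloor>"
  have "log 2 (real i) \<ge> 0" using assms by simp
  then have "log 2 (real i) < real k + 1" unfolding k_def by linarith
  then have "2 powr log 2 (real i) < 2 powr (real k + 1)" by simp
  then have "real i < 2 powr (real k + 1)" using assms by simp
  then show ?thesis by (simp add: k_def[symmetric] powr_add powr_realpow)
qed

lemma psi_le:
  assumes "i \<ge> 1"
  shows "psi n i \<le> sqrt 2 / (sqrt (real n) * sqrt (real i))"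
proof (cases "i \<le> 2 ^ n - 1")
  case True
  define l :: real where "l = 2 ^ nat \<lfloor>log 2 (real i)\<rfloor>"
  have "l > 0" by (simp add: l_def)
  have "sqrt (real i) \<le> sqrt 2 * sqrt l"
    using less_two_mult_two_pow_floor_log[OF assms]
    by (simp add: l_def real_sqrt_mult[symmetric])
  then have "1 / sqrt l \<le> sqrt 2 / sqrt (real i)"
    using \<open>l > 0\<close> assms by (simp add: field_simps)
  then have "1 / sqrt (real n) * (1 / sqrt l) \<le> 1 / sqrt (real n) * (sqrt 2 / sqrt (real i))"
    by (intro mult_left_mono) auto
  then show ?thesis
    using True assms by (simp add: psi_def l_def)
next
  case False
  then show ?thesis by (simp add: psi_def)
qed

lemma inner_qubits_subset_state:
  assumes "S \<subseteq> {1..2 ^ n}"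
  shows "inner_qubits n u (subset_state S) = (\<Sum>i\<in>S. u i) / sqrt (real (card S))"
proof -
  have "inner_qubits n u (subset_state S) = (\<Sum>i\<in>S. u i * (1 / sqrt (real (card S))))"
    unfolding inner_qubits_def subset_state_def
    by (rule sum.mono_neutral_cong_right) (use assms in auto)
  then show ?thesis by (simp add: sum_divide_distrib)
qed

theorem mainTheorem3:
  fixes n :: nat and S :: "nat set"
  assumes "n \<ge> 1" and "S \<subseteq> {1..2 ^ n}" and "S \<noteq> {}"
  shows "inner_qubits n (psi n) (subset_state S) \<le> (2 + sqrt 2) / sqrt (real n)"
proof -
  have "finite S" and "0 \<notin> S" using assms(2) finite_subset by auto
  define s where "s = sqrt (real (card S))"
  have "s > 0" using \<open>finite S\<close> assms(3) by (simp add: s_def card_gt_0_iff)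
  have "(\<Sum>i\<in>S. psi n i) \<le> (\<Sum>i\<in>S. sqrt 2 / sqrt (real n) * (1 / sqrt (real i)))"
    using assms(2) by (intro sum_mono) (auto simp: psi_le)
  also have "\<dots> = sqrt 2 / sqrt (real n) * (\<Sum>i\<in>S. 1 / sqrt (real i))"
    by (simp add: sum_distrib_left)
  also have "\<dots> \<le> sqrt 2 / sqrt (real n) * (2 * s)"
    using sum_inverse_sqrt_le_sqrt_card[OF \<open>finite S\<close> \<open>0 \<notin> S\<close>]
    by (intro mult_left_mono) (simp_all add: s_def)
  finally have "inner_qubits n (psi n) (subset_state S) \<le> 2 * sqrt 2 / sqrt (real n)"
    using \<open>s > 0\<close> assms(2) by (simp add: inner_qubits_subset_state s_def[symmetric] field_simps)
  also have "\<dots> \<le> (2 + sqrt 2) / sqrt (real n)"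
    using real_sqrt_le_mono[of 2 4] by (intro divide_right_mono) auto
  finally show ?thesis .
qed

end
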